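(* Let $\Omega_n$ be a sequence of $\mathbb{C}$-proper convex open sets in $\mathbb{C}^d$ converging in the local Hausdorff topology to a $\mathbb{C}$-proper convex open set $\Omega$, and let $\varphi_n:\Delta\to\Omega_n$ be holomorphic maps. Then either (1) $\varphi_n(x)\to\infty$ for all $x\in\Delta$, or (2) some subsequence converges uniformly on compact subsets of $\Delta$ to a holomorphic map $\varphi:\Delta\to\overline{\Omega}$; moreover, in this case either $\varphi(\Delta)\subset\partial\Omega$ or $\varphi(\Delta)\subset\Omega$.
   Context: $\Delta$ is the unit disk. $\mathbb{C}$-proper: contains no complex affine line. Local Hausdorff topology: open convex $A_n\to A$ iff $d_H(\overline{A_n}\cap\overline{B_R(0)},\overline{A}\cap\overline{B_R(0)})\to0$ for all $R>0$. *)

theory Defs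
  imports "HOL-Analysis.Analysis"
begin

definition vec_holomorphic_on :: "(complex \<Rightarrow> complex ^ 'd) \<Rightarrow> complex set \<Rightarrow> bool" where
  "vec_holomorphic_on f S \<longleftrightarrow> (\<forall>i. (\<lambda>z. f z $ i) holomorphic_on S)"

definition C_proper :: "(complex ^ 'd) set \<Rightarrow> bool" where
  "C_proper A \<longleftrightarrow> \<not> (\<exists>a v. v \<noteq> 0 \<and> (\<forall>t::complex. a + t *s v \<in> A))"

definition hausdorff_dist :: "'a::metric_space set \<Rightarrow> 'a set \<Rightarrow> real" where
  "hausdorff_dist A B =
     (if A = {} \<and> B = {} then 0
      else max (SUP a\<in>A. infdist a B) (SUP b\<in>B. infdist b A))"

text \<open>The Hausdorff distance between an
  empty and a nonempty set is taken to be infinite, so convergence requires that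
  eventually the truncated closures are empty exactly when the limit truncation is.\<close>
definition local_hausdorff_conv :: "(nat \<Rightarrow> 'a::real_normed_vector set) \<Rightarrow> 'a set \<Rightarrow> bool" where
  "local_hausdorff_conv A L \<longleftrightarrow>
     (\<forall>R>0.
        (\<forall>\<^sub>F n in sequentially.
           (closure (A n) \<inter> cball 0 R = {}) \<longleftrightarrow> (closure L \<inter> cball 0 R = {})) \<and>
        ((\<lambda>n. hausdorff_dist (closure (A n) \<inter> cball 0 R) (closure L \<inter> cball 0 R))
           \<longlonglongrightarrow> 0))"

end

theory Submission
  imports Defs "HOL-Complex_Analysis.Complex_Analysis"
begin

text \<open>Suppose the first alternative fails at some point x0, so that a subsequence of
  \<phi>_n(x0) stays bounded. The key step is that this subsequence is then locally uniformly
  bounded; Montel's theorem (applied coordinatewise) produces a locally uniform limit \<phi>, which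
  takes values in the closure of \<Omega> because \<Omega>_n \<rightarrow> \<Omega>, and the maximum principle applied to
  exp \<langle>a, \<phi>\<rangle> for a supporting functional a gives the dichotomy \<phi>(\<Delta>) \<subseteq> \<partial>\<Omega> or \<phi>(\<Delta>) \<subseteq> \<Omega>.

  For local boundedness, suppose \<phi>_n(z_n) \<rightarrow> \<infinity> with z_n in a compact K, \<phi>_n(x0) \<rightarrow> p and
  \<phi>_n(z_n)/|\<phi>_n(z_n)| \<rightarrow> u. The closure of \<Omega> is again \<complex>-proper, so some y = p + \<zeta>u lies outside
  it, and for large n the domains \<Omega>_n lie in half-spaces Re \<langle>a_n, x\<rangle> \<le> Re \<langle>a_n, y\<rangle> - \<epsilon> with unit
  normals a_n \<rightarrow> a; passing to the limit at p gives \<langle>a, u\<rangle> \<noteq> 0. A Borel-Caratheodory estimate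
  (the Schwarz lemma after mapping the half-plane onto the disc) bounds \<langle>a_n, \<phi>_n\<rangle> on K, whereas
  \<langle>a_n, \<phi>_n(z_n)\<rangle> is about |\<phi>_n(z_n)| \<langle>a, u\<rangle>, which is unbounded.\<close>

section \<open>Hermitian pairing on complex vectors\<close>

text \<open>Conjugate-linear in the first argument, with real part the real inner product; so for
  holomorphic f the half-space condition a \<bullet> f w < c is a half-plane condition on cinner a \<circ> f.\<close>

definition cinner :: "complex ^ 'd \<Rightarrow> complex ^ 'd \<Rightarrow> complex" where
  "cinner a x = (\<Sum>i\<in>UNIV. cnj (a $ i) * x $ i)"

lemma Re_cinner: "Re (cinner a x) = a \<bullet> x"
  by (simp add: cinner_def inner_vec_def Re_sum inner_complex_def)

lemma cinner_scaleC: "cinner a (c *s x) = c * cinner a x"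
  by (simp add: cinner_def sum_distrib_left algebra_simps)

lemma cinner_scaleR: "cinner a (r *\<^sub>R x) = of_real r * cinner a x"
  unfolding cinner_def sum_distrib_left
  by (rule sum.cong) (auto simp: scaleR_conv_of_real[where 'a=complex] mult_ac)

lemma tendsto_cinner [tendsto_intros]:
  "(a \<longlongrightarrow> a0) F \<Longrightarrow> (x \<longlongrightarrow> x0) F \<Longrightarrow> ((\<lambda>k. cinner (a k) (x k)) \<longlongrightarrow> cinner a0 x0) F"
  unfolding cinner_def by (intro tendsto_intros)

lemma holomorphic_on_cinner:
  "vec_holomorphic_on f S \<Longrightarrow> (\<lambda>z. cinner a (f z)) holomorphic_on S"
  unfolding cinner_def vec_holomorphic_on_def by (intro holomorphic_intros) auto

lemma vec_holomorphic_on_imp_continuous_on: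
  assumes "vec_holomorphic_on f S"
  shows "continuous_on S f"
proof -
  have "continuous_on S (\<lambda>z. \<chi> i. f z $ i)"
    using assms unfolding vec_holomorphic_on_def
    by (intro continuous_on_vec_lambda holomorphic_on_imp_continuous_on) auto
  then show ?thesis by simp
qed

section \<open>Holomorphic maps into a half-plane\<close>

lemma Schwarz_Pick_zero:
  assumes holg: "g holomorphic_on ball 0 1" and g_disc: "\<And>w. norm w < 1 \<Longrightarrow> norm (g w) < 1"
    and x0: "norm x0 < 1" and gx0: "g x0 = 0" and z: "norm z < 1"
  shows "norm (g z) \<le> norm (Moebius_function 0 x0 z)"
proof -
  define M where "M = Moebius_function 0 (- x0)"
  have M_disc: "norm (M \<zeta>) < 1" if "norm \<zeta> < 1" for \<zeta>
    using Moebius_function_norm_lt_1 x0 that by (simp add: M_def)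
  have "(g \<circ> M) holomorphic_on ball 0 1"
    using M_disc x0 unfolding M_def
    by (intro holomorphic_on_compose_gen[OF Moebius_function_holomorphic holg]) auto
  moreover have "(g \<circ> M) 0 = 0"
    by (simp add: M_def Moebius_function_of_zero gx0)
  moreover have "M (Moebius_function 0 x0 z) = z"
    using Moebius_function_compose[of "- x0" x0 z] x0 z by (simp add: M_def)
  ultimately show ?thesis
    using Schwarz_Lemma(1)[of "g \<circ> M" "Moebius_function 0 x0 z"] g_disc M_disc
      Moebius_function_norm_lt_1[OF x0 z] by auto
qed

lemma norm_diff_lt_norm_add_cnj:
  assumes "Re w < 0" "Re w0 < 0"
  shows "cmod (w - w0) < cmod (w + cnj w0)"
proof -
  have "0 < Re w * Re w0" using mult_neg_neg[OF assms] .
  then have "(cmod (w - w0))\<^sup>2 < (cmod (w + cnj w0))\<^sup>2"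
    by (simp add: cmod_power2 power2_diff power2_sum)
  then show ?thesis by (rule power_less_imp_less_base) simp
qed

lemma holomorphic_halfplane_bound:
  assumes holf: "f holomorphic_on ball 0 1" and f_lt: "\<And>w. norm w < 1 \<Longrightarrow> Re (f w) < c"
    and x0: "norm x0 < 1" and z: "norm z < 1"
  defines "s \<equiv> cmod (Moebius_function 0 x0 z)"
  shows "(1 - s) * cmod (f z - f x0) \<le> 2 * s * (c - Re (f x0))"
proof -
  define w0 where "w0 = f x0 - c"
  have w0: "Re w0 < 0" using f_lt[OF x0] by (simp add: w0_def)
  have den: "w + cnj w0 \<noteq> 0" if "Re w < 0" for w
    using that w0 by (auto simp: complex_eq_iff)
  \<comment> \<open>h maps the left half-plane into the disc and sends f x0 - c to 0.\<close>
  define h where "h w = (w - w0) / (w + cnj w0)" for w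
  have h_disc: "cmod (h w) < 1" if "Re w < 0" for w
    using norm_diff_lt_norm_add_cnj[OF that w0] den[OF that] by (simp add: h_def norm_divide)
  have "(\<lambda>w. h (f w - c)) holomorphic_on ball 0 1"
    unfolding h_def using f_lt den by (intro holomorphic_intros holf) auto
  moreover have "norm (h (f w - c)) < 1" if "norm w < 1" for w
    using h_disc f_lt[OF that] by simp
  moreover have "h (f x0 - c) = 0"
    by (simp add: h_def w0_def)
  ultimately have "cmod (h (f z - c)) \<le> s"
    unfolding s_def using Schwarz_Pick_zero[OF _ _ x0 _ z] by blast
  then have "cmod (f z - f x0) \<le> s * cmod ((f z - f x0) + (w0 + cnj w0))"
    using den[of "f z - c"] f_lt[OF z] by (simp add: h_def w0_def norm_divide divide_le_eq algebra_simps)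
  also have "\<dots> \<le> s * (cmod (f z - f x0) + cmod (w0 + cnj w0))"
    by (simp add: s_def mult_left_mono norm_triangle_ineq)
  also have "cmod (w0 + cnj w0) = 2 * (c - Re (f x0))"
  proof -
    have "w0 + cnj w0 = - of_real (2 * (c - Re (f x0)))"
      by (simp add: complex_add_cnj w0_def)
    then show ?thesis using w0 by (simp only: norm_minus_cancel norm_of_real) (simp add: w0_def)
  qed
  finally show ?thesis by (simp add: algebra_simps)
qed

lemma holomorphic_halfplane_bound_compact:
  assumes x0: "norm x0 < 1" and K: "compact K" "K \<subseteq> ball 0 1"
  obtains C where "C \<ge> 0"
    "\<And>f c z. f holomorphic_on ball 0 1 \<Longrightarrow> (\<And>w. norm w < 1 \<Longrightarrow> Re (f w) < c) \<Longrightarrow> z \<in> K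
       \<Longrightarrow> cmod (f z - f x0) \<le> C * (c - Re (f x0))"
proof -
  obtain s where s: "0 \<le> s" "s < 1" "\<And>z. z \<in> K \<Longrightarrow> cmod (Moebius_function 0 x0 z) \<le> s"
  proof (cases "K = {}")
    case True
    then show ?thesis using that[of 0] by auto
  next
    case False
    have "continuous_on K (\<lambda>z. cmod (Moebius_function 0 x0 z))"
      using Moebius_function_holomorphic[OF x0, of 0] K(2)
      by (intro continuous_intros) (meson holomorphic_on_imp_continuous_on holomorphic_on_subset)
    then obtain z0 where "z0 \<in> K" "\<forall>z\<in>K. cmod (Moebius_function 0 x0 z) \<le> cmod (Moebius_function 0 x0 z0)"
      using continuous_attains_sup[OF K(1) False] by blast
    moreover have "cmod (Moebius_function 0 x0 z0) < 1"
      using Moebius_function_norm_lt_1[OF x0] \<open>z0 \<in> K\<close> K(2) by auto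
    ultimately show ?thesis
      using that[of "cmod (Moebius_function 0 x0 z0)"] by simp
  qed
  show thesis
  proof (rule that[of "2 * s / (1 - s)"])
    show "2 * s / (1 - s) \<ge> 0" using s by simp
    fix f c z
    assume f: "f holomorphic_on ball 0 1" "\<And>w. norm w < 1 \<Longrightarrow> Re (f w) < c" and z: "z \<in> K"
    have "norm z < 1" "norm x0 < 1" using z K(2) x0 by auto
    have "(1 - s) * cmod (f z - f x0) \<le> (1 - cmod (Moebius_function 0 x0 z)) * cmod (f z - f x0)"
      using s(3)[OF z] by (simp add: mult_right_mono)
    also have "\<dots> \<le> 2 * cmod (Moebius_function 0 x0 z) * (c - Re (f x0))"
      using holomorphic_halfplane_bound[OF f x0 \<open>norm z < 1\<close>] by simp
    also have "\<dots> \<le> 2 * s * (c - Re (f x0))"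
      using s(3)[OF z] f(2)[OF x0] by (simp add: mult_right_mono)
    finally show "cmod (f z - f x0) \<le> 2 * s / (1 - s) * (c - Re (f x0))"
      using s(2) by (simp add: field_simps)
  qed
qed

lemma filterlim_norm_cinner_at_top:
  assumes "(A \<longlongrightarrow> a) F" "((\<lambda>k. sgn (q k)) \<longlongrightarrow> u) F" "cinner a u \<noteq> 0"
    and "filterlim (\<lambda>k. norm (q k)) at_top F"
  shows "filterlim (\<lambda>k. cmod (cinner (A k) (q k))) at_top F"
proof -
  have "filterlim (\<lambda>k. cmod (cinner (A k) (sgn (q k))) * norm (q k)) at_top F"
  proof (rule filterlim_tendsto_pos_mult_at_top)
    show "((\<lambda>k. cmod (cinner (A k) (sgn (q k)))) \<longlongrightarrow> cmod (cinner a u)) F"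
      using assms(1,2) by (intro tendsto_intros)
  qed (use assms(3,4) in auto)
  moreover have scale: "cmod (cinner b (sgn x)) * norm x = cmod (cinner b x)" for b x :: "complex ^ 'd"
  proof -
    have "norm x *\<^sub>R sgn x = x"
      by (cases "x = 0") (simp_all add: sgn_div_norm)
    then show ?thesis
      using cinner_scaleR[of b "norm x" "sgn x"] by (simp add: norm_mult mult.commute)
  qed
  ultimately show ?thesis by (simp only: scale)
qed

lemma halfspace_cinner_bound:
  assumes x0: "norm x0 < 1" and K: "compact K" "K \<subseteq> ball 0 1"
  obtains C where "C \<ge> 0"
    "\<And>f a c z. vec_holomorphic_on f (ball 0 1) \<Longrightarrow> (\<And>w. norm w < 1 \<Longrightarrow> a \<bullet> f w < c) \<Longrightarrow> z \<in> K
       \<Longrightarrow> cmod (cinner a (f z)) \<le> cmod (cinner a (f x0)) + C * (c + cmod (cinner a (f x0)))"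
proof -
  obtain C where C: "C \<ge> 0"
    "\<And>f c z. f holomorphic_on ball 0 1 \<Longrightarrow> (\<And>w. norm w < 1 \<Longrightarrow> Re (f w) < c) \<Longrightarrow> z \<in> K
       \<Longrightarrow> cmod (f z - f x0) \<le> C * (c - Re (f x0))"
    using holomorphic_halfplane_bound_compact[OF x0 K] by blast
  show thesis
  proof (rule that[OF C(1)])
    fix f a c z
    assume f: "vec_holomorphic_on f (ball 0 1)" "\<And>w. norm w < 1 \<Longrightarrow> a \<bullet> f w < c" and "z \<in> K"
    define g where "g w = cinner a (f w)" for w
    have "cmod (g z - g x0) \<le> C * (c - Re (g x0))"
      using f \<open>z \<in> K\<close> by (intro C(2)) (auto simp: g_def Re_cinner holomorphic_on_cinner)
    also have "\<dots> \<le> C * (c + cmod (g x0))"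
      using C(1) abs_Re_le_cmod[of "g x0"] by (intro mult_left_mono) auto
    finally show "cmod (g z) \<le> cmod (g x0) + C * (c + cmod (g x0))"
      using norm_triangle_ineq2[of "g z" "g x0"] by simp
  qed
qed

lemma halfspace_confined_no_blowup:
  fixes \<phi> :: "nat \<Rightarrow> complex \<Rightarrow> complex ^ 'd"
  assumes x0: "norm x0 < 1" and K: "compact K" "K \<subseteq> ball 0 1" and zK: "\<And>k. z k \<in> K"
    and hol: "\<And>k. vec_holomorphic_on (\<phi> k) (ball 0 1)"
    and confined: "\<forall>\<^sub>F k in sequentially. \<forall>w. norm w < 1 \<longrightarrow> A k \<bullet> \<phi> k w < c k"
    and A: "A \<longlonglongrightarrow> a" and "Bseq c" and p: "(\<lambda>k. \<phi> k x0) \<longlonglongrightarrow> p"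
    and u: "(\<lambda>k. sgn (\<phi> k (z k))) \<longlonglongrightarrow> u" "cinner a u \<noteq> 0"
  shows "\<not> filterlim (\<lambda>k. norm (\<phi> k (z k))) at_top sequentially"
proof
  assume blowup: "filterlim (\<lambda>k. norm (\<phi> k (z k))) at_top sequentially"
  obtain C where C: "C \<ge> 0"
    "\<And>(f :: complex \<Rightarrow> complex ^ 'd) a c z. vec_holomorphic_on f (ball 0 1)
       \<Longrightarrow> (\<And>w. norm w < 1 \<Longrightarrow> a \<bullet> f w < c) \<Longrightarrow> z \<in> K
       \<Longrightarrow> cmod (cinner a (f z)) \<le> cmod (cinner a (f x0)) + C * (c + cmod (cinner a (f x0)))"
    using halfspace_cinner_bound[OF x0 K] by blast
  have "Bseq (\<lambda>k. cinner (A k) (\<phi> k x0))"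
    by (rule convergent_imp_Bseq[OF convergentI[OF tendsto_cinner[OF A p]]])
  then obtain M NC where M: "\<And>k. cmod (cinner (A k) (\<phi> k x0)) \<le> M" and NC: "\<And>k. norm (c k) \<le> NC"
    using \<open>Bseq c\<close> unfolding Bseq_def by (meson less_imp_le)
  define B where "B = M + C * (NC + M)"
  have "\<forall>\<^sub>F k in sequentially. cmod (cinner (A k) (\<phi> k (z k))) \<le> B"
    using confined
  proof eventually_elim
    case (elim k)
    have "cmod (cinner (A k) (\<phi> k (z k)))
        \<le> cmod (cinner (A k) (\<phi> k x0)) + C * (c k + cmod (cinner (A k) (\<phi> k x0)))"
      by (rule C(2)[OF hol _ zK]) (use elim in auto)
    also have "\<dots> \<le> B"
      unfolding B_def using M[of k] NC[of k] C(1) by (intro add_mono mult_left_mono) auto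
    finally show ?case .
  qed
  moreover have "\<forall>\<^sub>F k in sequentially. cmod (cinner (A k) (\<phi> k (z k))) > B"
    using filterlim_norm_cinner_at_top[OF A u blowup] by (simp add: filterlim_at_top_dense)
  ultimately have "\<forall>\<^sub>F k in sequentially. False"
    by eventually_elim simp
  then show False by simp
qed

section \<open>Convex sets\<close>

lemma convex_separating_unit_normal:
  fixes S :: "'a::euclidean_space set"
  assumes "convex S" "\<epsilon> > 0" "\<forall>x\<in>S. dist x y \<ge> \<epsilon>"
  obtains a where "norm a = 1" "\<forall>x\<in>S. a \<bullet> x \<le> a \<bullet> y - \<epsilon>/2"
proof (cases "S = {}")
  case True
  obtain b :: 'a where "b \<in> Basis" using nonempty_Basis by blast
  then show ?thesis using that[of b] True by simp
next
  case False
  have "S \<inter> cball y (\<epsilon>/2) = {}"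
    using assms(2,3) by (force simp: dist_commute)
  moreover have "cball y (\<epsilon>/2) \<noteq> {}"
    using assms(2) by simp
  ultimately obtain a b where ab: "a \<noteq> 0" "\<forall>x\<in>S. a \<bullet> x \<le> b" "\<forall>x\<in>cball y (\<epsilon>/2). a \<bullet> x \<ge> b"
    using separating_hyperplane_sets[OF assms(1) convex_cball False] by blast
  have "y - (\<epsilon>/2) *\<^sub>R sgn a \<in> cball y (\<epsilon>/2)"
    using assms(2) ab(1) by (simp add: dist_norm norm_sgn)
  then have "b \<le> a \<bullet> (y - (\<epsilon>/2) *\<^sub>R sgn a)"
    using ab(3) by blast
  also have "\<dots> = a \<bullet> y - (\<epsilon>/2) * norm a"
    using ab(1) by (simp add: inner_diff_right sgn_div_norm dot_square_norm power2_eq_square)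
  finally have "b \<le> a \<bullet> y - (\<epsilon>/2) * norm a" .
  then have "sgn a \<bullet> x \<le> sgn a \<bullet> y - \<epsilon>/2" if "x \<in> S" for x
    using ab(1,2) that by (force simp: sgn_div_norm field_simps)
  then show ?thesis
    using that[of "sgn a"] ab(1) by (simp add: norm_sgn)
qed

lemma open_convex_strict_support:
  fixes \<Omega> :: "'a::euclidean_space set"
  assumes "open \<Omega>" "convex \<Omega>" "w \<notin> \<Omega>"
  obtains a where "a \<noteq> 0" "\<forall>x\<in>\<Omega>. a \<bullet> x < a \<bullet> w"
proof (cases "\<Omega> = {}")
  case True
  obtain b :: 'a where "b \<in> Basis" using nonempty_Basis by blast
  then show ?thesis using that[of b] True by (simp add: nonzero_Basis)
next
  case False
  moreover have "\<Omega> \<inter> {w} = {}"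
    using assms(3) by simp
  ultimately obtain a b where ab: "a \<noteq> 0" "\<forall>x\<in>\<Omega>. a \<bullet> x \<le> b" "\<forall>x\<in>{w}. b \<le> a \<bullet> x"
    using separating_hyperplane_sets[OF assms(2) convex_singleton False insert_not_empty] by blast
  have "a \<bullet> x < b" if x: "x \<in> \<Omega>" for x
  proof -
    obtain e where "e > 0" "ball x e \<subseteq> \<Omega>"
      using assms(1) x by (rule openE)
    define t where "t = e / (2 * norm a)"
    have "t > 0" using \<open>e > 0\<close> ab(1) by (simp add: t_def)
    have "norm (t *\<^sub>R a) < e"
      using \<open>e > 0\<close> ab(1) by (simp add: t_def)
    then have "x + t *\<^sub>R a \<in> ball x e"
      by (simp add: dist_norm)
    then have "x + t *\<^sub>R a \<in> \<Omega>"
      using \<open>ball x e \<subseteq> \<Omega>\<close> by blast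
    then have "a \<bullet> (x + t *\<^sub>R a) \<le> b"
      using ab(2) by blast
    moreover have "a \<bullet> (x + t *\<^sub>R a) = a \<bullet> x + t * (norm a)\<^sup>2"
      by (simp add: inner_add_right dot_square_norm)
    moreover have "t * (norm a)\<^sup>2 > 0"
      using \<open>t > 0\<close> ab(1) by simp
    ultimately show ?thesis by linarith
  qed
  then have "\<forall>x\<in>\<Omega>. a \<bullet> x < a \<bullet> w"
    using ab(3) by (auto intro: order_less_le_trans)
  with ab(1) show ?thesis by (rule that)
qed

lemma closed_convex_recession:
  fixes C :: "'a::real_normed_vector set"
  assumes "closed C" "convex C" "\<And>t. t \<ge> 0 \<Longrightarrow> p + t *\<^sub>R v \<in> C" "q \<in> C"
  shows "q + v \<in> C"
proof -
  define l where "l n = inverse (real (Suc n))" for n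
  have "(1 - l n) *\<^sub>R q + l n *\<^sub>R (p + real (Suc n) *\<^sub>R v) \<in> C" for n
    using assms(2-4) by (intro convexD) (auto simp: l_def inverse_le_1_iff)
  moreover have "(1 - l n) *\<^sub>R q + l n *\<^sub>R (p + real (Suc n) *\<^sub>R v) = q + v + l n *\<^sub>R (p - q)" for n
  proof -
    have "l n * real (Suc n) = 1" by (simp add: l_def)
    then have "(1 - l n) *\<^sub>R q + l n *\<^sub>R (p + real (Suc n) *\<^sub>R v)
        = (1 - l n) *\<^sub>R q + l n *\<^sub>R p + v"
      by (simp only: scaleR_add_right scaleR_scaleR scaleR_one add.assoc)
    then show ?thesis by (simp add: algebra_simps)
  qed
  moreover have "(\<lambda>n. q + v + l n *\<^sub>R (p - q)) \<longlonglongrightarrow> q + v + 0 *\<^sub>R (p - q)"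
    unfolding l_def by (intro tendsto_intros LIMSEQ_inverse_real_of_nat)
  ultimately show ?thesis
    using closed_sequentially[OF assms(1)] by (metis (no_types, lifting) scale_zero_left add_0_right)
qed

lemma C_proper_closure:
  fixes \<Omega> :: "(complex ^ 'd) set"
  assumes "open \<Omega>" "convex \<Omega>" "C_proper \<Omega>"
  shows "C_proper (closure \<Omega>)"
  unfolding C_proper_def
  \<comment> \<open>A line in the closure has parallel translates through every point of \<Omega>, by recession.\<close>
proof clarify
  fix p v :: "complex ^ 'd"
  assume "v \<noteq> 0" and line: "\<forall>t. p + t *s v \<in> closure \<Omega>"
  have "q + t *s v \<in> \<Omega>" if "q \<in> \<Omega>" for q t
  proof -
    obtain \<delta> where "\<delta> > 0" "ball q \<delta> \<subseteq> \<Omega>"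
      using assms(1) \<open>q \<in> \<Omega>\<close> by (rule openE)
    have shift: "x + t *s v \<in> closure \<Omega>" if "x \<in> \<Omega>" for x
    proof (rule closed_convex_recession)
      show "p + r *\<^sub>R (t *s v) \<in> closure \<Omega>" for r
      proof -
        have "r *\<^sub>R (t *s v) = (of_real r * t) *s v"
          unfolding vec_eq_iff vector_scaleR_component by (simp add: scaleR_conv_of_real)
        then show ?thesis using line by simp
      qed
    qed (use that closure_subset convex_closure[OF assms(2)] in auto)
    have "ball (q + t *s v) \<delta> \<subseteq> closure \<Omega>"
    proof
      fix x assume "x \<in> ball (q + t *s v) \<delta>"
      then have "x - t *s v \<in> ball q \<delta>"
        by (simp add: dist_norm algebra_simps)
      then have "(x - t *s v) + t *s v \<in> closure \<Omega>"
        using \<open>ball q \<delta> \<subseteq> \<Omega>\<close> shift by blast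
      then show "x \<in> closure \<Omega>" by simp
    qed
    then have "q + t *s v \<in> interior (closure \<Omega>)"
      using \<open>\<delta> > 0\<close> by (meson centre_in_ball interior_maximal open_ball subsetD)
    then show ?thesis
      using convex_interior_closure[OF assms(2)] interior_open[OF assms(1)] by simp
  qed
  moreover have "\<Omega> \<noteq> {}"
    using line by auto
  ultimately show False
    using assms(3) \<open>v \<noteq> 0\<close> unfolding C_proper_def by blast
qed

section \<open>Local Hausdorff convergence\<close>

lemma infdist_le_hausdorff_dist:
  fixes A B :: "'a::real_normed_vector set"
  assumes "x \<in> A" "bounded A" "B \<noteq> {}"
  shows "infdist x B \<le> hausdorff_dist A B"
proof -
  obtain b where b: "b \<in> B" using assms(3) by auto
  obtain M where M: "\<forall>a\<in>A. norm a \<le> M" using assms(2) bounded_iff by blast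
  have "infdist a B \<le> M + norm b" if "a \<in> A" for a
    using infdist_le[OF b, of a] M that norm_triangle_ineq4[of a b] by (auto simp: dist_norm)
  then have "infdist x B \<le> (SUP a\<in>A. infdist a B)"
    by (intro cSUP_upper[OF assms(1)] bdd_aboveI2)
  then show ?thesis
    using assms(1) by (auto simp: hausdorff_dist_def intro: max.coboundedI1)
qed

lemma local_hausdorff_conv_compose:
  assumes "local_hausdorff_conv A L" "filterlim r sequentially sequentially"
  shows "local_hausdorff_conv (\<lambda>k. A (r k)) L"
  using assms unfolding local_hausdorff_conv_def
  by (auto intro: eventually_compose_filterlim filterlim_compose)

lemma local_hausdorff_conv_eventually_near:
  assumes "local_hausdorff_conv A L" "R > 0" "e > 0"
  shows "\<forall>\<^sub>F n in sequentially. \<forall>x \<in> closure (A n) \<inter> cball 0 R. \<exists>w \<in> closure L. dist x w < e"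
proof -
  let ?An = "\<lambda>n. closure (A n) \<inter> cball 0 R" and ?L = "closure L \<inter> cball 0 R"
  have "\<forall>\<^sub>F n in sequentially. ?An n = {} \<longleftrightarrow> ?L = {}"
    and "(\<lambda>n. hausdorff_dist (?An n) ?L) \<longlonglongrightarrow> 0"
    using assms(1,2) unfolding local_hausdorff_conv_def by auto
  then have "\<forall>\<^sub>F n in sequentially. (?An n = {} \<longleftrightarrow> ?L = {}) \<and> hausdorff_dist (?An n) ?L < e"
    using assms(3) by (intro eventually_conj order_tendstoD(2))
  then show ?thesis
  proof eventually_elim
    case (elim n)
    show ?case
    proof
      fix x assume x: "x \<in> ?An n"
      then have "?L \<noteq> {}" using elim by auto
      moreover have "infdist x ?L < e"
        using infdist_le_hausdorff_dist[of x "?An n" ?L] x elim \<open>?L \<noteq> {}\<close>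
        by (simp add: bounded_Int)
      moreover have "bdd_below ((\<lambda>w. dist x w) ` ?L)"
        by (rule bdd_belowI[of _ 0]) auto
      ultimately have "\<exists>w\<in>?L. dist x w < e"
        by (simp add: infdist_notempty cINF_less_iff)
      then show "\<exists>w\<in>closure L. dist x w < e" by blast
    qed
  qed
qed

lemma local_hausdorff_conv_limit_in_closure:
  assumes "local_hausdorff_conv A L" "\<forall>\<^sub>F k in sequentially. x k \<in> closure (A k)" "x \<longlonglongrightarrow> p"
  shows "p \<in> closure L"
proof -
  have "\<forall>e>0. \<exists>w\<in>closure L. dist w p < e"
  proof (intro allI impI)
    fix e :: real assume "e > 0"
    have "\<forall>\<^sub>F k in sequentially. (\<forall>y \<in> closure (A k) \<inter> cball 0 (norm p + 1). \<exists>w \<in> closure L. dist y w < e/2)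
        \<and> dist (x k) p < min 1 (e/2) \<and> x k \<in> closure (A k)"
      using \<open>e > 0\<close> assms by (intro eventually_conj local_hausdorff_conv_eventually_near tendstoD)
        (auto simp: add_nonneg_pos)
    then obtain k where k: "\<forall>y \<in> closure (A k) \<inter> cball 0 (norm p + 1). \<exists>w \<in> closure L. dist y w < e/2"
        "dist (x k) p < min 1 (e/2)" "x k \<in> closure (A k)"
      using eventually_happens'[OF sequentially_bot] by blast
    have "norm (x k) \<le> norm p + 1"
      using k(2) norm_triangle_ineq2[of "x k" p] by (simp add: dist_norm)
    then obtain w where "w \<in> closure L" "dist (x k) w < e/2"
      using k(1,3) by (meson IntI mem_cball_0)
    moreover have "dist w p < e"
      using \<open>dist (x k) w < e/2\<close> k(2) dist_triangle3[of w p "x k"] by (simp add: dist_commute)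
    ultimately show "\<exists>w\<in>closure L. dist w p < e" by blast
  qed
  then show ?thesis
    using closure_approachable[of p "closure L"] by simp
qed

lemma local_hausdorff_conv_eventually_far:
  assumes "local_hausdorff_conv A L" "y \<notin> closure L"
  obtains \<epsilon> where "\<epsilon> > 0" "\<forall>\<^sub>F n in sequentially. \<forall>x\<in>A n. dist x y \<ge> \<epsilon>"
proof -
  obtain \<delta> where \<delta>: "\<delta> > 0" "ball y \<delta> \<subseteq> - closure L"
    using open_contains_ball[of "- closure L"] assms(2) by auto
  have "\<forall>\<^sub>F n in sequentially. \<forall>x\<in>closure (A n) \<inter> cball 0 (norm y + \<delta>). \<exists>w\<in>closure L. dist x w < \<delta>/2"
    using \<delta>(1) by (intro local_hausdorff_conv_eventually_near[OF assms(1)]) (auto simp: add_nonneg_pos)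
  then have "\<forall>\<^sub>F n in sequentially. \<forall>x\<in>A n. dist x y \<ge> \<delta>/2"
  proof eventually_elim
    case (elim n)
    show ?case
    proof (intro ballI leI notI)
      fix x assume x: "x \<in> A n" "dist x y < \<delta>/2"
      have "norm x \<le> norm y + \<delta>"
        using x(2) norm_triangle_ineq2[of x y] \<delta>(1) by (simp add: dist_norm)
      then have "x \<in> closure (A n) \<inter> cball 0 (norm y + \<delta>)"
        using x(1) closure_subset by auto
      then obtain w where w: "w \<in> closure L" "dist x w < \<delta>/2"
        using elim by blast
      have "dist y w < \<delta>"
        using w(2) x(2) dist_triangle[of y w x] by (simp add: dist_commute)
      then show False
        using \<delta>(2) w(1) by auto
    qed
  qed
  then show thesis using that[of "\<delta>/2"] \<delta>(1) by simp
qed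

lemma local_hausdorff_conv_convergent_normals:
  fixes A :: "nat \<Rightarrow> 'a::euclidean_space set"
  assumes "local_hausdorff_conv A L" "\<And>n. convex (A n)" "y \<notin> closure L"
  obtains \<epsilon> s N a where "\<epsilon> > 0" "strict_mono s" "N \<longlonglongrightarrow> a"
    "\<forall>\<^sub>F k in sequentially. \<forall>x\<in>A (s k). N k \<bullet> x \<le> N k \<bullet> y - \<epsilon>"
proof -
  obtain \<epsilon> where \<epsilon>: "\<epsilon> > 0" "\<forall>\<^sub>F n in sequentially. \<forall>x\<in>A n. dist x y \<ge> \<epsilon>"
    using local_hausdorff_conv_eventually_far[OF assms(1,3)] by blast
  have "\<exists>a. norm a = 1 \<and> ((\<forall>x\<in>A n. dist x y \<ge> \<epsilon>) \<longrightarrow> (\<forall>x\<in>A n. a \<bullet> x \<le> a \<bullet> y - \<epsilon>/2))"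
    for n
  proof (cases "\<forall>x\<in>A n. dist x y \<ge> \<epsilon>")
    case True
    then show ?thesis
      using convex_separating_unit_normal[OF assms(2) \<epsilon>(1)] by metis
  next
    case False
    obtain b :: 'a where "b \<in> Basis" using nonempty_Basis by blast
    then show ?thesis using False by (intro exI[of _ b] conjI) (simp, blast)
  qed
  then obtain a where "\<And>n. norm (a n) = 1"
    and a: "\<And>n. (\<forall>x\<in>A n. dist x y \<ge> \<epsilon>) \<Longrightarrow> (\<forall>x\<in>A n. a n \<bullet> x \<le> a n \<bullet> y - \<epsilon>/2)"
    by metis
  then have "bounded (range a)"
    by (auto simp: bounded_iff)
  then obtain s b where s: "strict_mono s" and "(a \<circ> s) \<longlonglongrightarrow> b"
    using bounded_imp_convergent_subsequence by blast
  moreover have "\<forall>\<^sub>F k in sequentially. \<forall>x\<in>A (s k). a (s k) \<bullet> x \<le> a (s k) \<bullet> y - \<epsilon>/2"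
    using eventually_compose_filterlim[OF \<epsilon>(2) filterlim_subseq[OF s]] by (rule eventually_mono) (rule a)
  ultimately show thesis
    using that[of "\<epsilon>/2" s "a \<circ> s" b] \<epsilon>(1) by simp
qed

section \<open>Montel's theorem for vector-valued maps\<close>

lemma uniform_limit_vec_componentwise:
  fixes f :: "'i \<Rightarrow> 'a \<Rightarrow> 'b::real_normed_vector ^ 'd"
  assumes "\<And>j. uniform_limit K (\<lambda>n z. f n z $ j) (\<lambda>z. g z $ j) F"
  shows "uniform_limit K f g F"
  unfolding uniform_limit_iff
proof (intro allI impI)
  fix e :: real assume "e > 0"
  then have "\<forall>\<^sub>F n in F. \<forall>j. \<forall>z\<in>K. dist (f n z $ j) (g z $ j) < e / CARD('d)"
    using assms by (intro eventually_all_finite) (simp add: uniform_limitD)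
  then show "\<forall>\<^sub>F n in F. \<forall>z\<in>K. dist (f n z) (g z) < e"
  proof (rule eventually_mono, intro ballI)
    fix n z assume close: "\<forall>j. \<forall>z\<in>K. dist (f n z $ j) (g z $ j) < e / CARD('d)" and "z \<in> K"
    have "dist (f n z) (g z) \<le> (\<Sum>j\<in>UNIV. dist (f n z $ j) (g z $ j))"
      unfolding dist_vec_def by (rule L2_set_le_sum) simp
    also have "\<dots> < (\<Sum>j\<in>(UNIV::'d set). e / CARD('d))"
      using close \<open>z \<in> K\<close> by (intro sum_strict_mono) auto
    finally show "dist (f n z) (g z) < e" by simp
  qed
qed

lemma Montel_coordinate:
  fixes F :: "nat \<Rightarrow> complex \<Rightarrow> complex ^ 'd"
  assumes "open S" and hol: "\<And>n. vec_holomorphic_on (F n) S"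
    and bd: "\<And>K. compact K \<Longrightarrow> K \<subseteq> S \<Longrightarrow> \<exists>B. \<forall>n. \<forall>z\<in>K. norm (F n z) \<le> B"
  obtains g r where "g holomorphic_on S" "strict_mono r"
    "\<And>K. compact K \<Longrightarrow> K \<subseteq> S \<Longrightarrow> uniform_limit K (\<lambda>n z. F (r n) z $ i) g sequentially"
proof -
  have hol_i: "h holomorphic_on S" if "h \<in> range (\<lambda>n z. F n z $ i)" for h
    using that hol by (auto simp: vec_holomorphic_on_def)
  have bounded_i: "\<exists>B. \<forall>h\<in>range (\<lambda>n z. F n z $ i). \<forall>z\<in>K. norm (h z) \<le> B"
    if K: "compact K" "K \<subseteq> S" for K
  proof -
    obtain B where B: "\<forall>n. \<forall>z\<in>K. norm (F n z) \<le> B"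
      using bd[OF K] by blast
    have "norm (F n z $ i) \<le> B" if "z \<in> K" for n z
      using B that by (intro order_trans[OF Finite_Cartesian_Product.norm_nth_le]) blast
    then show ?thesis by (intro exI[of _ B]) auto
  qed
  show thesis
    by (rule Montel[OF \<open>open S\<close> hol_i bounded_i order_refl]) (use that in \<open>auto simp: o_def\<close>)
qed

lemma Montel_components:
  fixes F :: "nat \<Rightarrow> complex \<Rightarrow> complex ^ 'd"
  assumes "open S" and hol: "\<And>n. vec_holomorphic_on (F n) S"
    and bd: "\<And>K. compact K \<Longrightarrow> K \<subseteq> S \<Longrightarrow> \<exists>B. \<forall>n. \<forall>z\<in>K. norm (F n z) \<le> B"
    and "finite I"
  shows "\<exists>r G. strict_mono r \<and> (\<forall>j\<in>I. G j holomorphic_on S \<and>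
           (\<forall>K. compact K \<and> K \<subseteq> S \<longrightarrow> uniform_limit K (\<lambda>n z. F (r n) z $ j) (G j) sequentially))"
  using \<open>finite I\<close>
proof (induction I rule: finite_induct)
  case empty
  show ?case by (intro exI[of _ id]) (auto simp: strict_mono_def)
next
  case (insert i I)
  then obtain r G where r: "strict_mono r" and G: "\<forall>j\<in>I. G j holomorphic_on S \<and>
      (\<forall>K. compact K \<and> K \<subseteq> S \<longrightarrow> uniform_limit K (\<lambda>n z. F (r n) z $ j) (G j) sequentially)"
    by blast
  obtain g r' where g: "g holomorphic_on S" "strict_mono r'"
      "\<And>K. compact K \<Longrightarrow> K \<subseteq> S \<Longrightarrow> uniform_limit K (\<lambda>n z. F (r (r' n)) z $ i) g sequentially"
    using Montel_coordinate[of S "\<lambda>n. F (r n)"] \<open>open S\<close> hol bd by metis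
  have unif: "uniform_limit K (\<lambda>n z. F ((r \<circ> r') n) z $ j) ((G(i := g)) j) sequentially"
    if "j \<in> insert i I" "compact K" "K \<subseteq> S" for j K
  proof (cases "j = i")
    case True
    then show ?thesis using g(3)[OF that(2,3)] by simp
  next
    case False
    then have "uniform_limit K (\<lambda>n z. F (r n) z $ j) (G j) sequentially"
      using G that by blast
    from filterlim_compose[OF this filterlim_subseq[OF g(2)]]
    show ?thesis using False by (simp add: o_def)
  qed
  show ?case
  proof (intro exI[of _ "r \<circ> r'"] exI[of _ "G(i := g)"] conjI ballI allI impI)
    show "strict_mono (r \<circ> r')" by (rule strict_mono_o[OF r g(2)])
    fix j assume j: "j \<in> insert i I"
    show "(G(i := g)) j holomorphic_on S"
      using j G g(1) by auto
    fix K assume "compact K \<and> K \<subseteq> S"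
    then show "uniform_limit K (\<lambda>n z. F ((r \<circ> r') n) z $ j) ((G(i := g)) j) sequentially"
      using unif[OF j] by blast
  qed
qed

lemma vec_Montel:
  fixes F :: "nat \<Rightarrow> complex \<Rightarrow> complex ^ 'd"
  assumes "open S" "\<And>n. vec_holomorphic_on (F n) S"
    and "\<And>K. compact K \<Longrightarrow> K \<subseteq> S \<Longrightarrow> \<exists>B. \<forall>n. \<forall>z\<in>K. norm (F n z) \<le> B"
  obtains g r where "vec_holomorphic_on g S" "strict_mono r"
    "\<And>K. compact K \<Longrightarrow> K \<subseteq> S \<Longrightarrow> uniform_limit K (F \<circ> r) g sequentially"
proof -
  obtain r G where "strict_mono r" and G: "\<forall>j. G j holomorphic_on S \<and>
      (\<forall>K. compact K \<and> K \<subseteq> S \<longrightarrow> uniform_limit K (\<lambda>n z. F (r n) z $ j) (G j) sequentially)"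
    using Montel_components[OF assms finite_class.finite_UNIV] by blast
  show thesis
  proof (rule that[of "\<lambda>z. \<chi> j. G j z" r])
    show "vec_holomorphic_on (\<lambda>z. \<chi> j. G j z) S"
      using G by (simp add: vec_holomorphic_on_def)
    show "uniform_limit K (F \<circ> r) (\<lambda>z. \<chi> j. G j z) sequentially" if "compact K" "K \<subseteq> S" for K
      using G that by (intro uniform_limit_vec_componentwise) (simp add: o_def)
  qed (rule \<open>strict_mono r\<close>)
qed

section \<open>Normal families of maps into converging domains\<close>

lemma unbounded_family_blowup:
  fixes f :: "nat \<Rightarrow> 'a \<Rightarrow> 'b::real_normed_vector"
  assumes bdd: "\<And>n. bounded (f n ` K)" and unbdd: "\<not> (\<exists>B. \<forall>n. \<forall>z\<in>K. norm (f n z) \<le> B)"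
  obtains m z where "filterlim m sequentially sequentially" "\<And>k. z k \<in> K"
    "filterlim (\<lambda>k. norm (f (m k) (z k))) at_top sequentially"
proof -
  have "\<exists>n\<ge>N. \<exists>z\<in>K. norm (f n z) > B" for N B
  proof (rule ccontr)
    assume "\<not> ?thesis"
    then have tail: "norm (f n z) \<le> B" if "n \<ge> N" "z \<in> K" for n z
      using that by (meson not_le)
    obtain B' where B': "\<forall>y\<in>(\<Union>n<N. f n ` K). norm y \<le> B'"
      using bounded_UN[of "{..<N}" "\<lambda>n. f n ` K"] bdd by (auto simp: bounded_iff)
    have "norm (f n z) \<le> max B B'" if "z \<in> K" for n z
      using tail[of n z] B' that by (cases "n < N") (auto simp: le_max_iff_disj)
    then show False using unbdd by blast
  qed
  then have "\<forall>k. \<exists>n z. n \<ge> k \<and> z \<in> K \<and> norm (f n z) > real k"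
    by blast
  then obtain m z where m: "\<And>k. m k \<ge> k" and z: "\<And>k. z k \<in> K" "\<And>k. norm (f (m k) (z k)) > real k"
    by metis
  show thesis
  proof (rule that[of m z])
    show "filterlim m sequentially sequentially"
      using m by (intro filterlim_at_top_mono[OF filterlim_ident]) auto
    show "filterlim (\<lambda>k. norm (f (m k) (z k))) at_top sequentially"
      using z(2) by (intro filterlim_at_top_mono[OF filterlim_real_sequentially] always_eventually)
        (simp add: less_imp_le)
  qed (rule z(1))
qed

lemma not_tendsto_at_top_bounded_subseq:
  fixes f :: "nat \<Rightarrow> real"
  assumes "\<not> filterlim f at_top sequentially"
  obtains r :: "nat \<Rightarrow> nat" and B where "strict_mono r" "\<And>n. f (r n) \<le> B"
proof -
  obtain B where "\<not> (\<forall>\<^sub>F n in sequentially. B \<le> f n)"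
    using assms unfolding filterlim_at_top by blast
  then have "infinite {n. f n < B}"
    by (simp add: cofinite_eq_sequentially[symmetric] eventually_cofinite not_le)
  then obtain r :: "nat \<Rightarrow> nat" where "strict_mono r" "\<And>n. r n \<in> {n. f n < B}"
    using infinite_enumerate by blast
  then show thesis using that[of r B] by (simp add: less_imp_le)
qed

lemma norm_eq_1_if_tendsto_sgn:
  fixes q :: "'i \<Rightarrow> 'a::real_normed_vector"
  assumes "((\<lambda>k. sgn (q k)) \<longlongrightarrow> u) F" "filterlim (\<lambda>k. norm (q k)) at_top F" "F \<noteq> bot"
  shows "norm u = 1"
proof -
  have "\<forall>\<^sub>F k in F. norm (sgn (q k)) = 1"
    using assms(2) unfolding filterlim_at_top
    by (rule eventually_mono[OF spec[of _ 1]]) (auto simp: norm_sgn)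
  then have "((\<lambda>k. norm (sgn (q k))) \<longlongrightarrow> 1) F"
    by (rule tendsto_eventually)
  then show ?thesis
    using tendsto_unique[OF assms(3) tendsto_norm[OF assms(1)]] by blast
qed

lemma no_blowup_into_converging_domains:
  fixes \<Omega>s :: "nat \<Rightarrow> (complex ^ 'd) set" and \<phi> :: "nat \<Rightarrow> complex \<Rightarrow> complex ^ 'd"
  assumes \<Omega>: "open \<Omega>" "convex \<Omega>" "C_proper \<Omega>"
    and \<Omega>s: "\<And>k. convex (\<Omega>s k)" "local_hausdorff_conv \<Omega>s \<Omega>"
    and hol: "\<And>k. vec_holomorphic_on (\<phi> k) (ball 0 1)" and img: "\<And>k. \<phi> k ` ball 0 1 \<subseteq> \<Omega>s k"
    and x0: "x0 \<in> ball 0 1" and K: "compact K" "K \<subseteq> ball 0 1" and zK: "\<And>k. z k \<in> K"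
    and p: "(\<lambda>k. \<phi> k x0) \<longlonglongrightarrow> p" and u: "(\<lambda>k. sgn (\<phi> k (z k))) \<longlonglongrightarrow> u"
  shows "\<not> filterlim (\<lambda>k. norm (\<phi> k (z k))) at_top sequentially"
proof
  assume blowup: "filterlim (\<lambda>k. norm (\<phi> k (z k))) at_top sequentially"
  have "p \<in> closure \<Omega>"
    using img x0 closure_subset
    by (intro local_hausdorff_conv_limit_in_closure[OF \<Omega>s(2) _ p] always_eventually) blast
  moreover have "u \<noteq> 0"
    using norm_eq_1_if_tendsto_sgn[OF u blowup] by auto
  ultimately obtain \<zeta> where "p + \<zeta> *s u \<notin> closure \<Omega>"
    using C_proper_closure[OF \<Omega>] unfolding C_proper_def by blast
  then obtain \<epsilon> s N a where \<epsilon>: "\<epsilon> > 0" and s: "strict_mono s" and N: "N \<longlonglongrightarrow> a"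
    and sep\<Omega>: "\<forall>\<^sub>F k in sequentially. \<forall>x\<in>\<Omega>s (s k). N k \<bullet> x \<le> N k \<bullet> (p + \<zeta> *s u) - \<epsilon>"
    using local_hausdorff_conv_convergent_normals[OF \<Omega>s(2,1)] by blast
  from sep\<Omega> have sep: "\<forall>\<^sub>F k in sequentially. \<forall>w\<in>ball 0 1. N k \<bullet> \<phi> (s k) w \<le> N k \<bullet> (p + \<zeta> *s u) - \<epsilon>"
    by (rule eventually_mono) (use img in blast)
  have "a \<bullet> p \<le> a \<bullet> (p + \<zeta> *s u) - \<epsilon>"
  proof (rule tendsto_le[OF trivial_limit_sequentially])
    show "(\<lambda>k. N k \<bullet> \<phi> (s k) x0) \<longlonglongrightarrow> a \<bullet> p"
      using N LIMSEQ_subseq_LIMSEQ[OF p s] by (intro tendsto_intros) (simp_all add: o_def)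
    show "(\<lambda>k. N k \<bullet> (p + \<zeta> *s u) - \<epsilon>) \<longlonglongrightarrow> a \<bullet> (p + \<zeta> *s u) - \<epsilon>"
      using N by (intro tendsto_intros)
  qed (use sep x0 in \<open>auto elim: eventually_mono\<close>)
  then have "Re (cinner a (\<zeta> *s u)) \<ge> \<epsilon>"
    by (simp add: Re_cinner inner_add_right)
  then have "cinner a u \<noteq> 0"
    using \<epsilon> by (auto simp: cinner_scaleC)
  have "\<not> filterlim (\<lambda>k. norm (\<phi> (s k) (z (s k)))) at_top sequentially"
  proof (rule halfspace_confined_no_blowup[of x0 K "\<lambda>k. z (s k)" "\<lambda>k. \<phi> (s k)"])
    show "\<forall>\<^sub>F k in sequentially. \<forall>w. norm w < 1 \<longrightarrow> N k \<bullet> \<phi> (s k) w < N k \<bullet> (p + \<zeta> *s u)"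
      using sep \<epsilon> by (elim eventually_mono) (force simp: mem_ball_0)
    show "Bseq (\<lambda>k. N k \<bullet> (p + \<zeta> *s u))"
      by (rule convergent_imp_Bseq[OF convergentI[OF tendsto_inner[OF N tendsto_const]]])
    show "(\<lambda>k. \<phi> (s k) x0) \<longlonglongrightarrow> p"
      using LIMSEQ_subseq_LIMSEQ[OF p s] by (simp add: o_def)
    show "(\<lambda>k. sgn (\<phi> (s k) (z (s k)))) \<longlonglongrightarrow> u"
      using LIMSEQ_subseq_LIMSEQ[OF u s] by (simp add: o_def)
  qed (use x0 K zK hol N \<open>cinner a u \<noteq> 0\<close> in auto)
  moreover have "filterlim (\<lambda>k. norm (\<phi> (s k) (z (s k)))) at_top sequentially"
    using filterlim_compose[OF blowup filterlim_subseq[OF s]] by (simp add: o_def)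
  ultimately show False by contradiction
qed

lemma locally_bounded_if_bounded_at_point:
  fixes \<Omega>s :: "nat \<Rightarrow> (complex ^ 'd) set" and \<phi> :: "nat \<Rightarrow> complex \<Rightarrow> complex ^ 'd"
  assumes \<Omega>: "open \<Omega>" "convex \<Omega>" "C_proper \<Omega>"
    and \<Omega>s: "\<And>n. convex (\<Omega>s n)" "local_hausdorff_conv \<Omega>s \<Omega>"
    and hol: "\<And>n. vec_holomorphic_on (\<phi> n) (ball 0 1)" and img: "\<And>n. \<phi> n ` ball 0 1 \<subseteq> \<Omega>s n"
    and x0: "x0 \<in> ball 0 1" and bdd0: "bounded (range (\<lambda>n. \<phi> n x0))"
    and K: "compact K" "K \<subseteq> ball 0 1"
  shows "\<exists>B. \<forall>n. \<forall>z\<in>K. norm (\<phi> n z) \<le> B"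
proof (rule ccontr)
  assume unbdd: "\<not> ?thesis"
  have "bounded (\<phi> n ` K)" for n
    using vec_holomorphic_on_imp_continuous_on[OF hol] K
    by (intro compact_imp_bounded compact_continuous_image) (auto intro: continuous_on_subset)
  then obtain m z where m: "filterlim m sequentially sequentially" and zK: "\<And>k. z k \<in> K"
    and blowup: "filterlim (\<lambda>k. norm (\<phi> (m k) (z k))) at_top sequentially"
    using unbounded_family_blowup[OF _ unbdd] by blast
  have "range (\<lambda>k. (\<phi> (m k) x0, sgn (\<phi> (m k) (z k)))) \<subseteq> range (\<lambda>n. \<phi> n x0) \<times> cball 0 1"
    by (auto simp: norm_sgn)
  then have "bounded (range (\<lambda>k. (\<phi> (m k) x0, sgn (\<phi> (m k) (z k)))))"
    using bounded_subset[OF bounded_Times[OF bdd0 bounded_cball]] by blast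
  then obtain pu s where s: "strict_mono s"
    and lim: "((\<lambda>k. (\<phi> (m k) x0, sgn (\<phi> (m k) (z k)))) \<circ> s) \<longlonglongrightarrow> pu"
    using bounded_imp_convergent_subsequence by blast
  have ms: "filterlim (\<lambda>k. m (s k)) sequentially sequentially"
    using filterlim_compose[OF m filterlim_subseq[OF s]] .
  have "\<not> filterlim (\<lambda>k. norm (\<phi> (m (s k)) (z (s k)))) at_top sequentially"
  proof (rule no_blowup_into_converging_domains[OF \<Omega>])
    show "local_hausdorff_conv (\<lambda>k. \<Omega>s (m (s k))) \<Omega>"
      by (rule local_hausdorff_conv_compose[OF \<Omega>s(2) ms])
    show "(\<lambda>k. \<phi> (m (s k)) x0) \<longlonglongrightarrow> fst pu"
      using tendsto_fst[OF lim] by (simp add: o_def)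
    show "(\<lambda>k. sgn (\<phi> (m (s k)) (z (s k)))) \<longlonglongrightarrow> snd pu"
      using tendsto_snd[OF lim] by (simp add: o_def)
  qed (use \<Omega>s(1) hol img x0 K zK in auto)
  moreover have "filterlim (\<lambda>k. norm (\<phi> (m (s k)) (z (s k)))) at_top sequentially"
    using filterlim_compose[OF blowup filterlim_subseq[OF s]] by (simp add: o_def)
  ultimately show False by contradiction
qed

lemma vec_holomorphic_closure_dichotomy:
  fixes \<Omega> :: "(complex ^ 'd) set"
  assumes "open \<Omega>" "convex \<Omega>" "open U" "connected U"
    and hol: "vec_holomorphic_on \<phi> U" and cl: "\<phi> ` U \<subseteq> closure \<Omega>"
  shows "\<phi> ` U \<subseteq> frontier \<Omega> \<or> \<phi> ` U \<subseteq> \<Omega>"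
proof (rule disjCI)
  assume "\<not> \<phi> ` U \<subseteq> \<Omega>"
  then obtain z0 where z0: "z0 \<in> U" "\<phi> z0 \<notin> \<Omega>" by blast
  then obtain a where "a \<noteq> 0" and a: "\<forall>x\<in>\<Omega>. a \<bullet> x < a \<bullet> \<phi> z0"
    using open_convex_strict_support[OF assms(1,2)] by blast
  have "closure \<Omega> \<subseteq> {x. a \<bullet> x \<le> a \<bullet> \<phi> z0}"
    using a by (intro closure_minimal) (auto simp: closed_halfspace_le less_imp_le)
  with cl have le: "Re (cinner a (\<phi> z)) \<le> Re (cinner a (\<phi> z0))" if "z \<in> U" for z
    using that by (auto simp: Re_cinner)
  \<comment> \<open>The modulus exp (a \<bullet> \<phi> z) of the holomorphic function below is maximal at z0.\<close>
  have "(\<lambda>z. exp (cinner a (\<phi> z))) constant_on U"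
    using le z0(1) holomorphic_on_cinner[OF hol]
    by (intro maximum_modulus_principle[OF _ assms(3,4,3) order_refl z0(1)] holomorphic_intros) auto
  then have exp_const: "exp (cinner a (\<phi> z)) = exp (cinner a (\<phi> z0))" if "z \<in> U" for z
    using that z0(1) by (auto simp: constant_on_def)
  then have "Re (cinner a (\<phi> z)) = Re (cinner a (\<phi> z0))" if "z \<in> U" for z
    using arg_cong[of _ _ norm, OF exp_const[OF that]] by simp
  then have "\<phi> z \<notin> \<Omega>" if "z \<in> U" for z
    using a that by (force simp: Re_cinner)
  then show "\<phi> ` U \<subseteq> frontier \<Omega>"
    using cl interior_open[OF assms(1)] by (auto simp: frontier_def)
qed

lemma convergent_subseq_if_bounded_at_point:
  fixes \<Omega>s :: "nat \<Rightarrow> (complex ^ 'd) set" and \<phi> :: "nat \<Rightarrow> complex \<Rightarrow> complex ^ 'd"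
  assumes \<Omega>: "open \<Omega>" "convex \<Omega>" "C_proper \<Omega>"
    and \<Omega>s: "\<And>n. convex (\<Omega>s n)" "local_hausdorff_conv \<Omega>s \<Omega>"
    and hol: "\<And>n. vec_holomorphic_on (\<phi> n) (ball 0 1)" and img: "\<And>n. \<phi> n ` ball 0 1 \<subseteq> \<Omega>s n"
    and x0: "x0 \<in> ball 0 1" and bdd0: "bounded (range (\<lambda>n. \<phi> n x0))"
  obtains r g where "strict_mono r" "vec_holomorphic_on g (ball 0 1)" "g ` ball 0 1 \<subseteq> closure \<Omega>"
    "\<And>K. compact K \<Longrightarrow> K \<subseteq> ball 0 1 \<Longrightarrow> uniform_limit K (\<lambda>n. \<phi> (r n)) g sequentially"
    "g ` ball 0 1 \<subseteq> frontier \<Omega> \<or> g ` ball 0 1 \<subseteq> \<Omega>"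
proof -
  obtain g r where g: "vec_holomorphic_on g (ball 0 1)" and r: "strict_mono r"
    and lim: "\<And>K. compact K \<Longrightarrow> K \<subseteq> ball 0 1 \<Longrightarrow> uniform_limit K (\<phi> \<circ> r) g sequentially"
    using vec_Montel[OF open_ball hol locally_bounded_if_bounded_at_point[OF \<Omega> \<Omega>s hol img x0 bdd0]]
    by blast
  have "g z \<in> closure \<Omega>" if "z \<in> ball 0 1" for z
  proof (rule local_hausdorff_conv_limit_in_closure)
    show "local_hausdorff_conv (\<lambda>n. \<Omega>s (r n)) \<Omega>"
      by (rule local_hausdorff_conv_compose[OF \<Omega>s(2) filterlim_subseq[OF r]])
    show "(\<lambda>n. \<phi> (r n) z) \<longlonglongrightarrow> g z"
      using tendsto_uniform_limitI[OF lim[of "{z}"]] that by (simp add: o_def)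
    show "\<forall>\<^sub>F n in sequentially. \<phi> (r n) z \<in> closure (\<Omega>s (r n))"
      using img that closure_subset by (intro always_eventually) blast
  qed
  then have "g ` ball 0 1 \<subseteq> closure \<Omega>" by blast
  with g r lim show thesis
    using vec_holomorphic_closure_dichotomy[OF \<Omega>(1,2) open_ball connected_ball g]
    by (intro that) (simp_all add: o_def)
qed

theorem proposition4p2:
  fixes \<Omega>s :: "nat \<Rightarrow> (complex ^ 'd) set"
    and \<Omega> :: "(complex ^ 'd) set"
    and \<phi>s :: "nat \<Rightarrow> complex \<Rightarrow> complex ^ 'd"
  assumes "\<And>n. open (\<Omega>s n)" and "\<And>n. convex (\<Omega>s n)" and "\<And>n. C_proper (\<Omega>s n)"
    and "open \<Omega>" and "convex \<Omega>" and "C_proper \<Omega>"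
    and "local_hausdorff_conv \<Omega>s \<Omega>"
    and "\<And>n. vec_holomorphic_on (\<phi>s n) (ball 0 1)"
    and "\<And>n. \<phi>s n ` ball 0 1 \<subseteq> \<Omega>s n"
  shows "(\<forall>x\<in>ball 0 1. filterlim (\<lambda>n. norm (\<phi>s n x)) at_top sequentially)
     \<or> (\<exists>r \<phi>. strict_mono r \<and> vec_holomorphic_on \<phi> (ball 0 1)
            \<and> \<phi> ` ball 0 1 \<subseteq> closure \<Omega>
            \<and> (\<forall>K. compact K \<and> K \<subseteq> ball 0 1 \<longrightarrow>
                   uniform_limit K (\<lambda>n. \<phi>s (r n)) \<phi> sequentially)
            \<and> (\<phi> ` ball 0 1 \<subseteq> frontier \<Omega> \<or> \<phi> ` ball 0 1 \<subseteq> \<Omega>))"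
proof (cases "\<forall>x\<in>ball 0 1. filterlim (\<lambda>n. norm (\<phi>s n x)) at_top sequentially")
  case False
  then obtain x0 where x0: "x0 \<in> ball 0 1" "\<not> filterlim (\<lambda>n. norm (\<phi>s n x0)) at_top sequentially"
    by blast
  then obtain r0 :: "nat \<Rightarrow> nat" and B where r0: "strict_mono r0" "\<And>n. norm (\<phi>s (r0 n) x0) \<le> B"
    using not_tendsto_at_top_bounded_subseq by blast
  have "local_hausdorff_conv (\<lambda>n. \<Omega>s (r0 n)) \<Omega>"
    by (rule local_hausdorff_conv_compose[OF assms(7) filterlim_subseq[OF r0(1)]])
  moreover have "bounded (range (\<lambda>n. \<phi>s (r0 n) x0))"
    using r0(2) by (auto simp: bounded_iff)
  ultimately obtain r \<phi> where "strict_mono r" "vec_holomorphic_on \<phi> (ball 0 1)" "\<phi> ` ball 0 1 \<subseteq> closure \<Omega>"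
    "\<And>K. compact K \<Longrightarrow> K \<subseteq> ball 0 1 \<Longrightarrow> uniform_limit K (\<lambda>n. \<phi>s (r0 (r n))) \<phi> sequentially"
    "\<phi> ` ball 0 1 \<subseteq> frontier \<Omega> \<or> \<phi> ` ball 0 1 \<subseteq> \<Omega>"
    using convergent_subseq_if_bounded_at_point[OF assms(4-6) assms(2) _ assms(8,9) x0(1)] by blast
  with strict_mono_o[OF r0(1) \<open>strict_mono r\<close>] show ?thesis
    by (intro disjI2 exI[of _ "r0 \<circ> r"] exI[of _ \<phi>]) (simp add: o_def)
qed simp

end
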